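(* Let $\mathbb{Z}\langle w_1,w_2,\ldots\rangle$ be the free associative algebra over $\mathbb{Z}$ on generators $w_n$ of degree $2n$, with the graded Hopf algebra structure given by $\Delta w_n=\sum_{k=0}^n\binom{n}{k}w_k\otimes w_{n-k}$ (where $w_0=1$), and let $\mathbb{Z}\langle \xi_1,\xi_2,\ldots\rangle$ be the free associative algebra over $\mathbb{Z}$ on generators $\xi_n$ of degree $2n$, with the graded Hopf algebra structure given by $\Delta\xi_n=1\otimes\xi_n+\xi_n\otimes1$. Then these two graded Hopf algebras are isomorphic over $\mathbb{Z}$. *)

theory Defs
  imports Main
begin

(* Free associative algebra Z<x_1,x_2,...>: elements are finitely supported
   integer-valued functions on words (nat lists) whose letters are >= 1.
   The letter n stands for the generator (w_n resp. xi_n) of degree 2n. *)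

definition word_deg :: "nat list \<Rightarrow> nat" where
  "word_deg w = (\<Sum>i\<leftarrow>w. 2 * i)"

definition NC :: "(nat list \<Rightarrow> int) set" where
  "NC = {p. finite {w. p w \<noteq> 0} \<and> (\<forall>w. p w \<noteq> 0 \<longrightarrow> (\<forall>i\<in>set w. 1 \<le> i))}"

definition nc_add :: "(nat list \<Rightarrow> int) \<Rightarrow> (nat list \<Rightarrow> int) \<Rightarrow> (nat list \<Rightarrow> int)" where
  "nc_add p q = (\<lambda>w. p w + q w)"

definition nc_mult :: "(nat list \<Rightarrow> int) \<Rightarrow> (nat list \<Rightarrow> int) \<Rightarrow> (nat list \<Rightarrow> int)" where
  "nc_mult p q = (\<lambda>w. \<Sum>i\<le>length w. p (take i w) * q (drop i w))"

definition nc_basis :: "nat list \<Rightarrow> (nat list \<Rightarrow> int)" where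
  "nc_basis u = (\<lambda>w. if w = u then 1 else 0)"

definition nc_one :: "nat list \<Rightarrow> int" where
  "nc_one = nc_basis []"

definition nc_gen :: "nat \<Rightarrow> (nat list \<Rightarrow> int)" where
  "nc_gen n = nc_basis [n]"

definition nc_counit :: "(nat list \<Rightarrow> int) \<Rightarrow> int" where
  "nc_counit p = p []"

definition homogeneous :: "nat \<Rightarrow> (nat list \<Rightarrow> int) \<Rightarrow> bool" where
  "homogeneous d p \<longleftrightarrow> (\<forall>w. p w \<noteq> 0 \<longrightarrow> word_deg w = d)"

(* Tensor square A \<otimes>_Z A: free Z-module on pairs of words; all degrees are even,
   so the Koszul sign in the product is trivial. *)

definition t_mult :: "(nat list \<times> nat list \<Rightarrow> int) \<Rightarrow> (nat list \<times> nat list \<Rightarrow> int)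
     \<Rightarrow> (nat list \<times> nat list \<Rightarrow> int)" where
  "t_mult F G = (\<lambda>(u, v). \<Sum>i\<le>length u. \<Sum>j\<le>length v.
       F (take i u, take j v) * G (drop i u, drop j v))"

definition tensor :: "(nat list \<Rightarrow> int) \<Rightarrow> (nat list \<Rightarrow> int) \<Rightarrow> (nat list \<times> nat list \<Rightarrow> int)" where
  "tensor p q = (\<lambda>(u, v). p u * q v)"

definition t_one :: "nat list \<times> nat list \<Rightarrow> int" where
  "t_one = tensor nc_one nc_one"

primrec t_word :: "(nat \<Rightarrow> (nat list \<times> nat list \<Rightarrow> int)) \<Rightarrow> nat list \<Rightarrow> (nat list \<times> nat list \<Rightarrow> int)" where
  "t_word g [] = t_one"
| "t_word g (i # w) = t_mult (g i) (t_word g w)"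

definition coprod_ext :: "(nat \<Rightarrow> (nat list \<times> nat list \<Rightarrow> int)) \<Rightarrow> (nat list \<Rightarrow> int)
     \<Rightarrow> (nat list \<times> nat list \<Rightarrow> int)" where
  "coprod_ext g p = (\<lambda>x. \<Sum>w\<in>{w. p w \<noteq> 0}. p w * t_word g w x)"

definition w_elt :: "nat \<Rightarrow> (nat list \<Rightarrow> int)" where
  "w_elt k = (if k = 0 then nc_one else nc_gen k)"

definition Delta_W :: "(nat list \<Rightarrow> int) \<Rightarrow> (nat list \<times> nat list \<Rightarrow> int)" where
  "Delta_W = coprod_ext (\<lambda>n x. \<Sum>k\<le>n. int (n choose k) * tensor (w_elt k) (w_elt (n - k)) x)"

definition Delta_Xi :: "(nat list \<Rightarrow> int) \<Rightarrow> (nat list \<times> nat list \<Rightarrow> int)" where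
  "Delta_Xi = coprod_ext (\<lambda>n x. tensor nc_one (nc_gen n) x + tensor (nc_gen n) nc_one x)"

definition t_map :: "((nat list \<Rightarrow> int) \<Rightarrow> (nat list \<Rightarrow> int)) \<Rightarrow> (nat list \<times> nat list \<Rightarrow> int)
     \<Rightarrow> (nat list \<times> nat list \<Rightarrow> int)" where
  "t_map f F = (\<lambda>x. \<Sum>uv\<in>{uv. F uv \<noteq> 0}.
       F uv * tensor (f (nc_basis (fst uv))) (f (nc_basis (snd uv))) x)"

(* graded Hopf algebra isomorphism from (Z<w>, Delta_W) to (Z<xi>, Delta_Xi):
   a degree-preserving Z-linear bijection which is an algebra map and a coalgebra map
   (the antipode is then automatically preserved). *)
definition graded_hopf_iso :: "((nat list \<Rightarrow> int) \<Rightarrow> (nat list \<Rightarrow> int)) \<Rightarrow> bool" where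
  "graded_hopf_iso f \<longleftrightarrow>
     bij_betw f NC NC \<and>
     (\<forall>p\<in>NC. \<forall>q\<in>NC. f (nc_add p q) = nc_add (f p) (f q)) \<and>
     (\<forall>p\<in>NC. \<forall>d. homogeneous d p \<longrightarrow> homogeneous d (f p)) \<and>
     f nc_one = nc_one \<and>
     (\<forall>p\<in>NC. \<forall>q\<in>NC. f (nc_mult p q) = nc_mult (f p) (f q)) \<and>
     (\<forall>p\<in>NC. t_map f (Delta_W p) = Delta_Xi (f p)) \<and>
     (\<forall>p\<in>NC. nc_counit (f p) = nc_counit p)"

end

theory Submission
  imports Defs "HOL-Library.Product_Plus"
begin

text \<open>
  Send \<open>w_n\<close> to the noncommutative complete Bell polynomial \<open>B_n\<close> in the \<open>\<xi>_k\<close>, defined by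
  \<open>B_0 = 1\<close> and \<open>B_(m+1) = \<Sum>i\<le>m. (m choose i) \<xi>_(i+1) B_(m-i)\<close>. Since \<open>B_n\<close> is \<open>\<xi>_n\<close> plus a
  polynomial in \<open>\<xi>_1, \<dots>, \<xi>_(n-1)\<close> with integer coefficients, this substitution is invertible
  over \<open>\<int>\<close>, the inverse being given by the same triangular recursion solved for its top term.
  The \<open>B_n\<close> are of binomial type, \<open>\<Delta> B_n = \<Sum>l\<le>n. (n choose l) B_l \<otimes> B_(n-l)\<close>, which follows
  from the recursion by induction because the \<open>\<xi>_k\<close> are primitive. Both coproducts and the
  substitution are algebra homomorphisms out of free algebras, so compatibility with the
  coproducts only has to be checked on generators, where it is exactly this binomial identity.
\<close>

section \<open>Convolution algebras of finitely supported functions\<close>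

class fin_split_monoid = monoid_add +
  assumes finite_sum_decompositions: "finite {p. fst p + snd p = x}"

text \<open>Under concatenation words form a monoid whose convolution algebra is the free algebra:
  \<open>nc_mult\<close> and \<open>t_mult\<close> are the convolution products of this monoid and of its square.\<close>

instantiation list :: (type) monoid_add
begin
definition plus_list :: "'a list \<Rightarrow> 'a list \<Rightarrow> 'a list" where "plus_list a b = a @ b"
definition zero_list :: "'a list" where "zero_list = []"
instance by standard (auto simp: plus_list_def zero_list_def)
end

lemma zero_list_Nil: "(0::'a list) = []"
  by (simp add: zero_list_def)

lemma plus_list_append: "(a::'a list) + b = a @ b"
  by (simp add: plus_list_def)

instance list :: (type) fin_split_monoid
proof
  fix x :: "'a list"
  have "{p. fst p + snd p = x} \<subseteq> (\<lambda>i. (take i x, drop i x)) ` {..length x}"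
  proof
    fix p assume "p \<in> {p. fst p + snd p = x}"
    then have "fst p @ snd p = x" by (simp add: plus_list_append)
    then show "p \<in> (\<lambda>i. (take i x, drop i x)) ` {..length x}"
      by (intro image_eqI[of _ _ "length (fst p)"]) auto
  qed
  then show "finite {p. fst p + snd p = x}" by (rule finite_subset) auto
qed

instance prod :: (fin_split_monoid, fin_split_monoid) fin_split_monoid
proof
  fix x :: "'a \<times> 'b"
  let ?pair = "\<lambda>(q, r). ((fst q, fst r), (snd q, snd r))"
  have "{p. fst p + snd p = x} \<subseteq>
          ?pair ` ({q. fst q + snd q = fst x} \<times> {r. fst r + snd r = snd x})"
  proof
    fix p assume "p \<in> {p. fst p + snd p = x}"
    then show "p \<in> ?pair ` ({q. fst q + snd q = fst x} \<times> {r. fst r + snd r = snd x})"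
      by (intro image_eqI[of _ _ "((fst (fst p), fst (snd p)), (snd (fst p), snd (snd p)))"]) auto
  qed
  then show "finite {p. fst p + snd p = x}"
    by (rule finite_subset) (intro finite_imageI finite_cartesian_product finite_sum_decompositions)
qed

definition supp :: "('a \<Rightarrow> int) \<Rightarrow> 'a set" where
  "supp P = {m. P m \<noteq> 0}"

abbreviation fin_supp :: "('a \<Rightarrow> int) \<Rightarrow> bool" where
  "fin_supp P \<equiv> finite (supp P)"

definition splittings :: "'a::fin_split_monoid \<Rightarrow> ('a \<times> 'a) set" where
  "splittings x = {p. fst p + snd p = x}"

lemma finite_splittings [simp]: "finite (splittings x)"
  unfolding splittings_def by (rule finite_sum_decompositions)

definition conv :: "('a::fin_split_monoid \<Rightarrow> int) \<Rightarrow> ('a \<Rightarrow> int) \<Rightarrow> 'a \<Rightarrow> int" where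
  "conv P Q = (\<lambda>x. \<Sum>p\<in>splittings x. P (fst p) * Q (snd p))"

definition delta :: "'a \<Rightarrow> 'a \<Rightarrow> int" where
  "delta m = (\<lambda>x. if x = m then 1 else 0)"

definition lin_ext :: "('a \<Rightarrow> 'b \<Rightarrow> int) \<Rightarrow> ('a \<Rightarrow> int) \<Rightarrow> 'b \<Rightarrow> int" where
  "lin_ext \<phi> P = (\<lambda>x. \<Sum>m\<in>supp P. P m * \<phi> m x)"

lemma conv_assoc: "conv (conv P Q) R = conv P (conv Q R)"
proof
  fix x
  have "conv (conv P Q) R x =
      (\<Sum>p\<in>splittings x. \<Sum>r\<in>splittings (fst p). P (fst r) * Q (snd r) * R (snd p))"
    by (simp add: conv_def sum_distrib_right)
  also have "\<dots> = (\<Sum>(p, r)\<in>Sigma (splittings x) (\<lambda>p. splittings (fst p)).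
                    P (fst r) * Q (snd r) * R (snd p))"
    by (rule sum.Sigma) auto
  also have "\<dots> = (\<Sum>(p, r)\<in>Sigma (splittings x) (\<lambda>p. splittings (snd p)).
                    P (fst p) * Q (fst r) * R (snd r))"
    by (rule sum.reindex_bij_witness[where i="\<lambda>(p, r). ((fst p + fst r, snd r), (fst p, fst r))"
          and j="\<lambda>(p, r). ((fst r, snd r + snd p), (snd r, snd p))"])
       (auto simp: splittings_def add.assoc)
  also have "\<dots> = (\<Sum>p\<in>splittings x. \<Sum>r\<in>splittings (snd p). P (fst p) * Q (fst r) * R (snd r))"
    by (rule sum.Sigma[symmetric]) auto
  also have "\<dots> = conv P (conv Q R) x"
    by (simp add: conv_def sum_distrib_left mult.assoc)
  finally show "conv (conv P Q) R x = conv P (conv Q R) x" .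
qed

lemma conv_delta_zero_left [simp]: "conv (delta 0) Q = Q"
proof
  fix x
  have "conv (delta 0) Q x = (\<Sum>p\<in>splittings x. if (0, x) = p then Q x else 0)"
    by (auto simp: conv_def delta_def splittings_def intro!: sum.cong)
  also have "\<dots> = Q x" by (subst sum.delta') (simp_all add: splittings_def finite_sum_decompositions)
  finally show "conv (delta 0) Q x = Q x" .
qed

lemma conv_delta_zero_right [simp]: "conv P (delta 0) = P"
proof
  fix x
  have "conv P (delta 0) x = (\<Sum>p\<in>splittings x. if (x, 0) = p then P x else 0)"
    by (auto simp: conv_def delta_def splittings_def intro!: sum.cong)
  also have "\<dots> = P x" by (subst sum.delta') (simp_all add: splittings_def finite_sum_decompositions)
  finally show "conv P (delta 0) x = P x" .
qed

lemma conv_delta_Nil [simp]: "conv (delta []) Q = Q" "conv Q (delta []) = Q"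
  using conv_delta_zero_left[of Q] conv_delta_zero_right[of Q] by (simp_all add: zero_list_Nil)

lemma conv_sum_left:
  "conv (\<lambda>x. \<Sum>i\<in>I. c i * F i x) Q y = (\<Sum>i\<in>I. c i * conv (F i) Q y)"
  by (simp add: conv_def sum_distrib_right sum_distrib_left mult.assoc sum.swap[of _ I])

lemma conv_sum_right:
  "conv Q (\<lambda>x. \<Sum>i\<in>I. c i * F i x) y = (\<Sum>i\<in>I. c i * conv Q (F i) y)"
  by (simp add: conv_def sum_distrib_right sum_distrib_left mult.left_commute sum.swap[of _ I])

lemma conv_add_left: "conv (\<lambda>x. A x + B x) Q y = conv A Q y + conv B Q y"
  by (simp add: conv_def distrib_right sum.distrib)

lemma supp_delta: "supp (delta m) = {m}"
  by (auto simp: supp_def delta_def)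

lemma fin_supp_delta [simp]: "fin_supp (delta m)"
  by (simp add: supp_delta)

lemma supp_conv: "supp (conv P Q) \<subseteq> (\<lambda>p. fst p + snd p) ` (supp P \<times> supp Q)"
proof
  fix x assume "x \<in> supp (conv P Q)"
  then obtain p where "p \<in> splittings x" "P (fst p) * Q (snd p) \<noteq> 0"
    by (auto simp: supp_def conv_def elim: sum.not_neutral_contains_not_neutral)
  then show "x \<in> (\<lambda>p. fst p + snd p) ` (supp P \<times> supp Q)"
    by (intro image_eqI[of _ _ p]) (auto simp: splittings_def supp_def mem_Times_iff)
qed

lemma fin_supp_conv: "fin_supp P \<Longrightarrow> fin_supp Q \<Longrightarrow> fin_supp (conv P Q)"
  by (rule finite_subset[OF supp_conv]) auto

lemma supp_sum: "supp (\<lambda>x. \<Sum>i\<in>I. c i * F i x) \<subseteq> (\<Union>i\<in>I. supp (F i))"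
  by (auto simp: supp_def elim!: sum.not_neutral_contains_not_neutral)

lemma supp_diff: "supp (\<lambda>x. A x - B x) \<subseteq> supp A \<union> supp B"
  by (auto simp: supp_def)

lemma fin_supp_sum: "finite I \<Longrightarrow> (\<And>i. i \<in> I \<Longrightarrow> fin_supp (F i)) \<Longrightarrow>
    fin_supp (\<lambda>x. \<Sum>i\<in>I. c i * F i x)"
  by (rule finite_subset[OF supp_sum]) auto

lemma conv_delta_delta: "conv (delta a) (delta b) = delta (a + b)"
proof
  fix x
  have "conv (delta a) (delta b) x = (\<Sum>p\<in>splittings x. if p = (a, b) then 1 else 0)"
    unfolding conv_def by (intro sum.cong) (auto simp: delta_def)
  also have "\<dots> = delta (a + b) x"
    by (subst sum.delta) (auto simp: delta_def splittings_def finite_sum_decompositions)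
  finally show "conv (delta a) (delta b) x = delta (a + b) x" .
qed

lemma lin_ext_eq: "finite S \<Longrightarrow> supp P \<subseteq> S \<Longrightarrow> lin_ext \<phi> P x = (\<Sum>m\<in>S. P m * \<phi> m x)"
  unfolding lin_ext_def by (rule sum.mono_neutral_left) (auto simp: supp_def)

lemma lin_ext_sum:
  assumes "finite I" "\<And>i. i \<in> I \<Longrightarrow> fin_supp (F i)"
  shows "lin_ext \<phi> (\<lambda>m. \<Sum>i\<in>I. c i * F i m) x = (\<Sum>i\<in>I. c i * lin_ext \<phi> (F i) x)"
proof -
  let ?S = "\<Union>i\<in>I. supp (F i)"
  have fin: "finite ?S" using assms by auto
  have "lin_ext \<phi> (\<lambda>m. \<Sum>i\<in>I. c i * F i m) x = (\<Sum>m\<in>?S. (\<Sum>i\<in>I. c i * F i m) * \<phi> m x)"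
    by (rule lin_ext_eq[OF fin supp_sum])
  also have "\<dots> = (\<Sum>i\<in>I. c i * (\<Sum>m\<in>?S. F i m * \<phi> m x))"
    by (simp add: sum_distrib_right sum_distrib_left mult.assoc sum.swap[of _ I])
  also have "\<dots> = (\<Sum>i\<in>I. c i * lin_ext \<phi> (F i) x)"
    by (intro sum.cong refl arg_cong2[where f="(*)"] lin_ext_eq[symmetric] fin) auto
  finally show ?thesis .
qed

lemma lin_ext_add:
  assumes "fin_supp A" "fin_supp B"
  shows "lin_ext \<phi> (\<lambda>m. A m + B m) x = lin_ext \<phi> A x + lin_ext \<phi> B x"
proof -
  let ?S = "supp A \<union> supp B"
  have "lin_ext \<phi> (\<lambda>m. A m + B m) x = (\<Sum>m\<in>?S. (A m + B m) * \<phi> m x)"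
    by (rule lin_ext_eq) (use assms in \<open>auto simp: supp_def\<close>)
  also have "\<dots> = (\<Sum>m\<in>?S. A m * \<phi> m x) + (\<Sum>m\<in>?S. B m * \<phi> m x)"
    by (simp add: distrib_right sum.distrib)
  also have "\<dots> = lin_ext \<phi> A x + lin_ext \<phi> B x"
    using assms by (subst (1 2) lin_ext_eq[where S = ?S]) auto
  finally show ?thesis .
qed

lemma lin_ext_diff:
  assumes "fin_supp A" "fin_supp B"
  shows "lin_ext \<phi> (\<lambda>m. A m - B m) x = lin_ext \<phi> A x - lin_ext \<phi> B x"
proof -
  let ?S = "supp A \<union> supp B"
  have "lin_ext \<phi> (\<lambda>m. A m - B m) x = (\<Sum>m\<in>?S. (A m - B m) * \<phi> m x)"
    by (rule lin_ext_eq) (use assms in \<open>auto simp: supp_def\<close>)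
  also have "\<dots> = (\<Sum>m\<in>?S. A m * \<phi> m x) - (\<Sum>m\<in>?S. B m * \<phi> m x)"
    by (simp add: left_diff_distrib sum_subtractf)
  also have "\<dots> = lin_ext \<phi> A x - lin_ext \<phi> B x"
    using assms by (subst (1 2) lin_ext_eq[where S = ?S]) auto
  finally show ?thesis .
qed

lemma lin_ext_delta [simp]: "lin_ext \<phi> (delta m) = \<phi> m"
  unfolding lin_ext_def supp_delta by (rule ext) (simp add: delta_def)

lemma lin_ext_cong: "(\<And>m. m \<in> supp P \<Longrightarrow> \<phi> m = \<psi> m) \<Longrightarrow> lin_ext \<phi> P = lin_ext \<psi> P"
  unfolding lin_ext_def by (intro ext sum.cong) auto

lemma lin_ext_delta_id: "fin_supp P \<Longrightarrow> lin_ext delta P = P"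
proof
  fix x assume "fin_supp P"
  have "lin_ext delta P x = (\<Sum>m\<in>supp P. if x = m then P x else 0)"
    unfolding lin_ext_def by (rule sum.cong) (auto simp: delta_def)
  then show "lin_ext delta P x = P x" using \<open>fin_supp P\<close> by (simp add: supp_def)
qed

lemma supp_lin_ext: "supp (lin_ext \<phi> P) \<subseteq> (\<Union>m\<in>supp P. supp (\<phi> m))"
  by (auto simp: lin_ext_def supp_def elim!: sum.not_neutral_contains_not_neutral)

lemma fin_supp_lin_ext: "fin_supp P \<Longrightarrow> (\<And>m. m \<in> supp P \<Longrightarrow> fin_supp (\<phi> m)) \<Longrightarrow>
    fin_supp (lin_ext \<phi> P)"
  by (rule finite_subset[OF supp_lin_ext]) auto

lemma lin_ext_lin_ext:
  assumes "fin_supp P" "\<And>m. fin_supp (\<psi> m)"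
  shows "lin_ext \<phi> (lin_ext \<psi> P) = lin_ext (\<lambda>m. lin_ext \<phi> (\<psi> m)) P"
proof
  fix x
  have "lin_ext \<phi> (lin_ext \<psi> P) x = (\<Sum>m\<in>supp P. P m * lin_ext \<phi> (\<psi> m) x)"
    unfolding lin_ext_def[of \<psi>] by (rule lin_ext_sum) (use assms in auto)
  then show "lin_ext \<phi> (lin_ext \<psi> P) x = lin_ext (\<lambda>m. lin_ext \<phi> (\<psi> m)) P x"
    by (simp add: lin_ext_def[of "\<lambda>m. lin_ext \<phi> (\<psi> m)"])
qed

lemma conv_as_sum:
  assumes "fin_supp P" "fin_supp Q"
  shows "conv P Q = (\<lambda>x. \<Sum>p\<in>supp P \<times> supp Q. P (fst p) * Q (snd p) * delta (fst p + snd p) x)"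
proof
  fix x
  have "conv P Q x = (\<Sum>p\<in>splittings x \<inter> (supp P \<times> supp Q). P (fst p) * Q (snd p))"
    unfolding conv_def by (rule sum.mono_neutral_right) (use assms in \<open>auto simp: supp_def\<close>)
  also have "\<dots> = (\<Sum>p\<in>supp P \<times> supp Q. P (fst p) * Q (snd p) * delta (fst p + snd p) x)"
    by (rule sum.mono_neutral_cong_left) (use assms in \<open>auto simp: splittings_def delta_def\<close>)
  finally show "conv P Q x = (\<Sum>p\<in>supp P \<times> supp Q. P (fst p) * Q (snd p) * delta (fst p + snd p) x)" .
qed

lemma lin_ext_conv:
  fixes \<phi> :: "'a::fin_split_monoid \<Rightarrow> 'b::fin_split_monoid \<Rightarrow> int"
  assumes P: "fin_supp P" and Q: "fin_supp Q" and hom: "\<And>a b. \<phi> (a + b) = conv (\<phi> a) (\<phi> b)"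
  shows "lin_ext \<phi> (conv P Q) = conv (lin_ext \<phi> P) (lin_ext \<phi> Q)"
proof
  fix x
  let ?A = "supp P" and ?B = "supp Q"
  have "lin_ext \<phi> (conv P Q) x = (\<Sum>p\<in>?A \<times> ?B. (P (fst p) * Q (snd p)) * \<phi> (fst p + snd p) x)"
    unfolding conv_as_sum[OF P Q] by (subst lin_ext_sum) (use P Q in auto)
  also have "\<dots> = (\<Sum>a\<in>?A. \<Sum>b\<in>?B. P a * (Q b * conv (\<phi> a) (\<phi> b) x))"
    by (simp add: hom sum.cartesian_product case_prod_beta mult.assoc)
  also have "\<dots> = conv (lin_ext \<phi> P) (lin_ext \<phi> Q) x"
    by (simp add: lin_ext_def conv_sum_left conv_sum_right sum_distrib_left)
  finally show "lin_ext \<phi> (conv P Q) x = conv (lin_ext \<phi> P) (lin_ext \<phi> Q) x" .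
qed

section \<open>Homomorphisms out of free algebras\<close>

primrec word_prod :: "('a \<Rightarrow> 'b::fin_split_monoid \<Rightarrow> int) \<Rightarrow> 'a list \<Rightarrow> 'b \<Rightarrow> int" where
  "word_prod h [] = delta 0"
| "word_prod h (a # u) = conv (h a) (word_prod h u)"

definition free_hom :: "('a \<Rightarrow> 'b::fin_split_monoid \<Rightarrow> int) \<Rightarrow> ('a list \<Rightarrow> int) \<Rightarrow> 'b \<Rightarrow> int" where
  "free_hom h = lin_ext (word_prod h)"

lemma word_prod_append: "word_prod h (u @ v) = conv (word_prod h u) (word_prod h v)"
  by (induction u) (simp_all add: conv_assoc)

lemma word_prod_plus: "word_prod h (u + v) = conv (word_prod h u) (word_prod h v)"
  by (simp add: plus_list_append word_prod_append)

lemma word_prod_cong: "(\<And>a. a \<in> set u \<Longrightarrow> h a = h' a) \<Longrightarrow> word_prod h u = word_prod h' u"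
  by (induction u) simp_all

lemma word_prod_letters: "word_prod (\<lambda>a. delta [a]) = delta"
proof
  fix u :: "'a list"
  show "word_prod (\<lambda>a. delta [a]) u = delta u"
    by (induction u) (simp_all add: zero_list_Nil conv_delta_delta plus_list_append)
qed

lemma fin_supp_word_prod: "(\<And>a. fin_supp (h a)) \<Longrightarrow> fin_supp (word_prod h u)"
  by (induction u) (simp_all add: supp_delta fin_supp_conv)

lemma free_hom_delta [simp]: "free_hom h (delta u) = word_prod h u"
  by (simp add: free_hom_def)

lemma free_hom_letter: "free_hom h (delta [a]) = h a"
  by (simp add: zero_list_Nil)

lemma free_hom_one: "free_hom h (delta []) = delta 0"
  by (simp add: zero_list_Nil)

lemma fin_supp_free_hom: "(\<And>a. fin_supp (h a)) \<Longrightarrow> fin_supp p \<Longrightarrow> fin_supp (free_hom h p)"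
  unfolding free_hom_def by (intro fin_supp_lin_ext fin_supp_word_prod)

lemma free_hom_conv:
  "fin_supp p \<Longrightarrow> fin_supp q \<Longrightarrow> free_hom h (conv p q) = conv (free_hom h p) (free_hom h q)"
  unfolding free_hom_def by (rule lin_ext_conv) (simp_all add: word_prod_plus)

lemma lin_ext_word_prod:
  assumes "\<And>a. fin_supp (h a)" "\<phi> 0 = delta 0" "\<And>a b. \<phi> (a + b) = conv (\<phi> a) (\<phi> b)"
  shows "lin_ext \<phi> (word_prod h u) = word_prod (\<lambda>a. lin_ext \<phi> (h a)) u"
  by (induction u) (simp_all add: assms lin_ext_conv fin_supp_word_prod)

lemma lin_ext_free_hom:
  assumes "\<And>a. fin_supp (h a)" "fin_supp p"
    and "\<phi> 0 = delta 0" "\<And>a b. \<phi> (a + b) = conv (\<phi> a) (\<phi> b)"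
  shows "lin_ext \<phi> (free_hom h p) = free_hom (\<lambda>a. lin_ext \<phi> (h a)) p"
proof -
  have "lin_ext \<phi> (free_hom h p) = lin_ext (\<lambda>u. lin_ext \<phi> (word_prod h u)) p"
    unfolding free_hom_def by (rule lin_ext_lin_ext) (simp_all add: assms fin_supp_word_prod)
  also have "\<dots> = lin_ext (word_prod (\<lambda>a. lin_ext \<phi> (h a))) p"
    by (simp only: lin_ext_word_prod[OF assms(1,3,4)])
  finally show ?thesis by (simp add: free_hom_def)
qed

lemma free_hom_free_hom:
  assumes "\<And>a. fin_supp (h a)" "fin_supp p"
  shows "free_hom g (free_hom h p) = free_hom (\<lambda>a. free_hom g (h a)) p"
proof -
  have "lin_ext (word_prod g) (free_hom h p) = free_hom (\<lambda>a. lin_ext (word_prod g) (h a)) p"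
    by (rule lin_ext_free_hom) (simp_all add: assms word_prod_plus zero_list_Nil)
  then show ?thesis by (simp add: free_hom_def)
qed

lemma free_hom_inverse:
  assumes "\<And>a. fin_supp (h a)" "fin_supp p"
    and "\<And>u a. u \<in> supp p \<Longrightarrow> a \<in> set u \<Longrightarrow> free_hom g (h a) = delta [a]"
  shows "free_hom g (free_hom h p) = p"
proof -
  have "free_hom g (free_hom h p) = lin_ext (word_prod (\<lambda>a. free_hom g (h a))) p"
    using free_hom_free_hom[OF assms(1,2), of g] by (simp add: free_hom_def)
  also have "\<dots> = lin_ext (word_prod (\<lambda>a. delta [a])) p"
    by (intro lin_ext_cong word_prod_cong) (use assms(3) in blast)
  finally show ?thesis by (simp add: word_prod_letters lin_ext_delta_id assms(2))
qed

lemma nc_mult_conv: "nc_mult = conv"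
proof (intro ext)
  fix p q :: "nat list \<Rightarrow> int" and w
  show "nc_mult p q w = conv p q w"
    unfolding nc_mult_def conv_def
    by (rule sum.reindex_bij_witness[where i="\<lambda>p. length (fst p)" and j="\<lambda>i. (take i w, drop i w)"])
       (auto simp: splittings_def plus_list_append)
qed

lemma t_mult_conv: "t_mult = conv"
proof (intro ext)
  fix F G :: "nat list \<times> nat list \<Rightarrow> int" and x :: "nat list \<times> nat list"
  obtain u v where x: "x = (u, v)" by (cases x)
  have "t_mult F G x = (\<Sum>ij\<in>{..length u} \<times> {..length v}.
           F (take (fst ij) u, take (snd ij) v) * G (drop (fst ij) u, drop (snd ij) v))"
    by (simp add: t_mult_def x sum.cartesian_product case_prod_beta)
  also have "\<dots> = conv F G x"
    unfolding conv_def
    by (rule sum.reindex_bij_witness[where i="\<lambda>p. (length (fst (fst p)), length (snd (fst p)))"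
          and j="\<lambda>ij. ((take (fst ij) u, take (snd ij) v), (drop (fst ij) u, drop (snd ij) v))"])
       (auto simp: splittings_def plus_list_append x)
  finally show "t_mult F G x = conv F G x" .
qed

lemma nc_basis_delta: "nc_basis = delta"
  by (intro ext) (simp add: nc_basis_def delta_def)

lemma nc_one_delta: "nc_one = delta []"
  by (simp add: nc_one_def nc_basis_delta)

lemma nc_gen_delta: "nc_gen n = delta [n]"
  by (simp add: nc_gen_def nc_basis_delta)

lemma w_elt_delta: "w_elt k = (if k = 0 then delta [] else delta [k])"
  by (simp add: w_elt_def nc_one_delta nc_gen_delta)

lemma fin_supp_w_elt [simp]: "fin_supp (w_elt k)"
  by (simp add: w_elt_delta supp_delta)

lemma tensor_delta: "tensor (delta u) (delta v) = delta (u, v)"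
  by (auto simp: tensor_def delta_def)

lemma tensor_conv: "conv (tensor a b) (tensor c d) = tensor (conv a c) (conv b d)"
proof
  fix x :: "nat list \<times> nat list"
  obtain u v where x: "x = (u, v)" by (cases x)
  show "conv (tensor a b) (tensor c d) x = tensor (conv a c) (conv b d) x"
    unfolding t_mult_conv[symmetric] nc_mult_conv[symmetric]
    by (simp add: t_mult_def nc_mult_def tensor_def x sum_product mult_ac)
qed

lemma tensor_sum_left:
  "tensor (\<lambda>w. \<Sum>i\<in>I. c i * F i w) B x = (\<Sum>i\<in>I. c i * tensor (F i) B x)"
  by (cases x) (simp add: tensor_def sum_distrib_right sum_distrib_left mult_ac)

lemma tensor_sum_right:
  "tensor B (\<lambda>w. \<Sum>i\<in>I. c i * F i w) x = (\<Sum>i\<in>I. c i * tensor B (F i) x)"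
  by (cases x) (simp add: tensor_def sum_distrib_right sum_distrib_left mult_ac)

lemma fin_supp_tensor: "fin_supp a \<Longrightarrow> fin_supp b \<Longrightarrow> fin_supp (tensor a b)"
  by (rule finite_subset[of _ "supp a \<times> supp b"]) (auto simp: supp_def tensor_def)

lemma coprod_ext_free_hom: "coprod_ext g = free_hom g"
proof -
  have "t_word g = word_prod g"
  proof
    fix w show "t_word g w = word_prod g w"
      by (induction w) (simp_all add: t_one_def nc_one_delta tensor_delta t_mult_conv
                                      zero_prod_def zero_list_Nil)
  qed
  then show ?thesis
    by (intro ext) (simp add: coprod_ext_def free_hom_def lin_ext_def supp_def)
qed

definition w_coprod_gen :: "nat \<Rightarrow> nat list \<times> nat list \<Rightarrow> int" where
  "w_coprod_gen n = (\<lambda>x. \<Sum>k\<le>n. int (n choose k) * tensor (w_elt k) (w_elt (n - k)) x)"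

definition xi_coprod_gen :: "nat \<Rightarrow> nat list \<times> nat list \<Rightarrow> int" where
  "xi_coprod_gen n = (\<lambda>x. tensor (delta []) (delta [n]) x + tensor (delta [n]) (delta []) x)"

lemma Delta_W_free_hom: "Delta_W = free_hom w_coprod_gen"
  by (simp add: Delta_W_def w_coprod_gen_def[abs_def] coprod_ext_free_hom)

lemma Delta_Xi_free_hom: "Delta_Xi = free_hom xi_coprod_gen"
  by (simp add: Delta_Xi_def xi_coprod_gen_def[abs_def] coprod_ext_free_hom nc_one_delta nc_gen_delta)

lemma fin_supp_w_coprod_gen [simp]: "fin_supp (w_coprod_gen n)"
  unfolding w_coprod_gen_def by (auto intro!: fin_supp_sum fin_supp_tensor)

lemma fin_supp_xi_coprod_gen [simp]: "fin_supp (xi_coprod_gen n)"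
  by (rule finite_subset[of _ "{([], [n]), ([n], [])}"])
     (auto simp: xi_coprod_gen_def tensor_def supp_def delta_def split: if_splits)

lemma conv_xi_coprod_gen:
  "conv (xi_coprod_gen k) (tensor A B) x =
     tensor A (conv (delta [k]) B) x + tensor (conv (delta [k]) A) B x"
  by (simp add: xi_coprod_gen_def conv_add_left tensor_conv zero_list_Nil[symmetric])

definition tensor_word_prod :: "(nat \<Rightarrow> nat list \<Rightarrow> int) \<Rightarrow> nat list \<times> nat list \<Rightarrow> nat list \<times> nat list \<Rightarrow> int" where
  "tensor_word_prod h uv = tensor (word_prod h (fst uv)) (word_prod h (snd uv))"

lemma t_map_free_hom: "t_map (free_hom h) = lin_ext (tensor_word_prod h)"
  by (intro ext) (simp add: t_map_def lin_ext_def supp_def nc_basis_delta tensor_word_prod_def)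

lemma tensor_word_prod_zero: "tensor_word_prod h 0 = delta 0"
  by (simp add: tensor_word_prod_def zero_prod_def zero_list_Nil tensor_delta)

lemma tensor_word_prod_plus:
  "tensor_word_prod h (a + b) = conv (tensor_word_prod h a) (tensor_word_prod h b)"
  by (simp add: tensor_word_prod_def word_prod_plus tensor_conv)

definition pos_words :: "nat list set" where
  "pos_words = {w. \<forall>i\<in>set w. 1 \<le> i}"

definition pos_words_deg :: "nat \<Rightarrow> nat list set" where
  "pos_words_deg d = {w \<in> pos_words. word_deg w = d}"

lemma NC_iff: "p \<in> NC \<longleftrightarrow> fin_supp p \<and> supp p \<subseteq> pos_words"
  by (auto simp: NC_def supp_def pos_words_def)

lemma pos_words_deg_subset: "pos_words_deg d \<subseteq> pos_words"
  by (simp add: pos_words_deg_def)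

lemma pos_words_letter: "[Suc m] \<in> pos_words"
  by (simp add: pos_words_def)

lemma supp_w_elt: "supp (w_elt k) \<subseteq> pos_words"
  by (simp add: w_elt_delta supp_delta pos_words_def)

lemma word_deg_Nil [simp]: "word_deg [] = 0"
  by (simp add: word_deg_def)

lemma word_deg_append [simp]: "word_deg (u @ v) = word_deg u + word_deg v"
  by (simp add: word_deg_def)

lemma supp_conv_list: "supp (conv p q) \<subseteq> {u @ v | u v. u \<in> supp p \<and> v \<in> supp q}"
proof
  fix x assume "x \<in> supp (conv p q)"
  then obtain uv where "uv \<in> supp p \<times> supp q" "x = fst uv + snd uv"
    using supp_conv by blast
  then show "x \<in> {u @ v | u v. u \<in> supp p \<and> v \<in> supp q}"
    by (cases uv) (auto simp: plus_list_append)
qed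

lemma supp_conv_pos_words_deg:
  "supp p \<subseteq> pos_words_deg d \<Longrightarrow> supp q \<subseteq> pos_words_deg e \<Longrightarrow>
    supp (conv p q) \<subseteq> pos_words_deg (d + e)"
  using supp_conv_list[of p q] by (fastforce simp: pos_words_deg_def pos_words_def)

lemma supp_conv_pos_words:
  "supp p \<subseteq> pos_words \<Longrightarrow> supp q \<subseteq> pos_words \<Longrightarrow> supp (conv p q) \<subseteq> pos_words"
  using supp_conv_list[of p q] by (fastforce simp: pos_words_def)

lemma supp_word_prod_pos_words:
  assumes "\<And>a. supp (h a) \<subseteq> pos_words"
  shows "supp (word_prod h u) \<subseteq> pos_words"
proof (induction u)
  case Nil
  then show ?case by (simp add: supp_delta pos_words_def zero_list_Nil)
next
  case (Cons a u)
  then show ?case using supp_conv_pos_words[OF assms Cons.IH] by simp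
qed

lemma supp_word_prod_pos_words_deg:
  assumes "\<And>a. supp (h a) \<subseteq> pos_words_deg (2 * a)"
  shows "supp (word_prod h u) \<subseteq> pos_words_deg (word_deg u)"
proof (induction u)
  case Nil
  then show ?case by (simp add: supp_delta pos_words_deg_def pos_words_def zero_list_Nil)
next
  case (Cons a u)
  then show ?case using supp_conv_pos_words_deg[OF assms Cons.IH] by (simp add: word_deg_def)
qed

lemma free_hom_NC:
  assumes "\<And>a. fin_supp (h a)" "\<And>a. supp (h a) \<subseteq> pos_words" "p \<in> NC"
  shows "free_hom h p \<in> NC"
proof -
  have "supp (free_hom h p) \<subseteq> (\<Union>u\<in>supp p. supp (word_prod h u))"
    unfolding free_hom_def by (rule supp_lin_ext)
  also have "\<dots> \<subseteq> pos_words"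
    using supp_word_prod_pos_words assms(2) by blast
  finally show ?thesis
    using assms by (simp add: NC_iff fin_supp_free_hom)
qed

lemma free_hom_inverse_NC:
  assumes "p \<in> NC" "\<And>a. fin_supp (h a)" "\<And>a. 1 \<le> a \<Longrightarrow> free_hom g (h a) = delta [a]"
  shows "free_hom g (free_hom h p) = p"
  using assms by (intro free_hom_inverse) (auto simp: NC_iff pos_words_def)

lemma free_hom_homogeneous:
  assumes "\<And>a. supp (h a) \<subseteq> pos_words_deg (2 * a)" "homogeneous d p"
  shows "homogeneous d (free_hom h p)"
proof -
  have "supp (free_hom h p) \<subseteq> (\<Union>u\<in>supp p. supp (word_prod h u))"
    unfolding free_hom_def by (rule supp_lin_ext)
  also have "\<dots> \<subseteq> {w. word_deg w = d}"
    using supp_word_prod_pos_words_deg[OF assms(1)] assms(2)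
    by (fastforce simp: homogeneous_def supp_def pos_words_deg_def)
  finally show ?thesis by (auto simp: homogeneous_def supp_def)
qed

lemma free_hom_counit:
  assumes "\<And>a. supp (h a) \<subseteq> pos_words_deg (2 * a)" "p \<in> NC"
  shows "nc_counit (free_hom h p) = nc_counit p"
proof -
  have "p u * word_prod h u [] = (if u = [] then p [] else 0)" if "u \<in> supp p" for u
  proof (cases u)
    case Nil
    then show ?thesis by (simp add: zero_list_Nil delta_def)
  next
    case (Cons a v)
    with that assms(2) have "word_deg u \<noteq> 0"
      by (auto simp: NC_iff pos_words_def word_deg_def)
    then have "[] \<notin> supp (word_prod h u)"
      using supp_word_prod_pos_words_deg[OF assms(1), of u] by (auto simp: pos_words_deg_def)
    with Cons show ?thesis by (simp add: supp_def)
  qed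
  then have "free_hom h p [] = (\<Sum>u\<in>supp p. if u = [] then p [] else 0)"
    unfolding free_hom_def lin_ext_def by (rule sum.cong[OF refl])
  also have "\<dots> = p []"
    using assms(2) by (simp add: NC_iff supp_def)
  finally show ?thesis by (simp add: nc_counit_def)
qed

section \<open>Noncommutative Bell polynomials and their inverses\<close>

fun bell :: "nat \<Rightarrow> nat list \<Rightarrow> int" where
  "bell 0 = delta []"
| "bell (Suc m) = (\<lambda>x. \<Sum>i\<le>m. int (m choose i) * conv (delta [Suc i]) (bell (m - i)) x)"

text \<open>The preimage of \<open>\<xi>_(m+1)\<close>, obtained by solving
  \<open>w_(m+1) = \<Sum>i\<le>m. (m choose i) bell_inv (i+1) w_(m-i)\<close> for its top term;
  the value at \<open>0\<close> is never used.\<close>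

fun bell_inv :: "nat \<Rightarrow> nat list \<Rightarrow> int" where
  "bell_inv 0 = delta []"
| "bell_inv (Suc m) = (\<lambda>x. delta [Suc m] x -
     (\<Sum>i<m. int (m choose i) * conv (bell_inv (Suc i)) (w_elt (m - i)) x))"

declare bell_inv.simps(2) [simp del]

lemma fin_supp_bell [simp]: "fin_supp (bell n)"
  by (induction n rule: bell.induct) (auto intro!: fin_supp_sum fin_supp_conv)

lemma supp_bell: "supp (bell n) \<subseteq> pos_words_deg (2 * n)"
proof (induction n rule: bell.induct)
  case 1
  then show ?case by (simp add: supp_delta pos_words_deg_def pos_words_def)
next
  case (2 m)
  have summand: "supp (conv (delta [Suc i]) (bell (m - i))) \<subseteq> pos_words_deg (2 * Suc m)"
    if "i \<le> m" for i
  proof -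
    have letter: "supp (delta [Suc i]) \<subseteq> pos_words_deg (2 * Suc i)"
      by (simp add: supp_delta pos_words_deg_def pos_words_letter word_deg_def)
    have IH: "supp (bell (m - i)) \<subseteq> pos_words_deg (2 * (m - i))"
      using "2.IH" that by simp
    have deg: "2 * Suc m = 2 * Suc i + 2 * (m - i)"
      using that by simp
    show ?thesis
      unfolding deg by (rule supp_conv_pos_words_deg[OF letter IH])
  qed
  show ?case
    unfolding bell.simps(2) by (rule order.trans[OF supp_sum]) (use summand in blast)
qed

lemma fin_supp_bell_inv [simp]: "fin_supp (bell_inv n)"
proof (induction n rule: bell_inv.induct)
  case (2 m)
  have "fin_supp (\<lambda>x. \<Sum>i<m. int (m choose i) * conv (bell_inv (Suc i)) (w_elt (m - i)) x)"
    using "2.IH" by (auto intro!: fin_supp_sum fin_supp_conv)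
  then show ?case
    unfolding bell_inv.simps(2)[of m] by (intro finite_subset[OF supp_diff]) auto
qed simp

lemma supp_bell_inv: "supp (bell_inv n) \<subseteq> pos_words"
proof (induction n rule: bell_inv.induct)
  case 1
  then show ?case by (simp add: supp_delta pos_words_def)
next
  case (2 m)
  have "supp (\<lambda>x. \<Sum>i<m. int (m choose i) * conv (bell_inv (Suc i)) (w_elt (m - i)) x) \<subseteq> pos_words"
  proof (intro order.trans[OF supp_sum] UN_least)
    fix i assume "i \<in> {..<m}"
    then show "supp (conv (bell_inv (Suc i)) (w_elt (m - i))) \<subseteq> pos_words"
      using "2.IH" by (intro supp_conv_pos_words supp_w_elt) simp
  qed
  then show ?case
    unfolding bell_inv.simps(2)[of m]
    by (intro order.trans[OF supp_diff]) (auto simp: supp_delta pos_words_letter)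
qed

lemma free_hom_bell_w_elt: "free_hom bell (w_elt k) = bell k"
  by (simp add: w_elt_delta free_hom_letter free_hom_one zero_list_Nil)

lemma free_hom_bell_bell_inv: "1 \<le> n \<Longrightarrow> free_hom bell (bell_inv n) = delta [n]"
proof (induction n rule: bell_inv.induct)
  case (2 m)
  let ?t = "\<lambda>i. conv (bell_inv (Suc i)) (w_elt (m - i))"
  show ?case
  proof
    fix x
    have "free_hom bell (bell_inv (Suc m)) x =
        bell (Suc m) x - (\<Sum>i<m. int (m choose i) * free_hom bell (?t i) x)"
      unfolding bell_inv.simps(2)[of m] free_hom_def
      by (simp add: lin_ext_diff lin_ext_sum fin_supp_sum fin_supp_conv
                    free_hom_letter[unfolded free_hom_def])
    also have "(\<Sum>i<m. int (m choose i) * free_hom bell (?t i) x) =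
        (\<Sum>i<m. int (m choose i) * conv (delta [Suc i]) (bell (m - i)) x)"
      by (intro sum.cong refl) (simp add: free_hom_conv "2.IH" free_hom_bell_w_elt)
    finally show "free_hom bell (bell_inv (Suc m)) x = delta [Suc m] x"
      by (simp add: lessThan_Suc_atMost[symmetric] zero_list_Nil)
  qed
qed simp

lemma free_hom_bell_inv_bell: "free_hom bell_inv (bell n) = w_elt n"
proof (induction n rule: bell.induct)
  case 1
  then show ?case by (simp add: w_elt_delta zero_list_Nil)
next
  case (2 m)
  show ?case
  proof
    fix x
    have "free_hom bell_inv (bell (Suc m)) x =
        (\<Sum>i\<le>m. int (m choose i) * free_hom bell_inv (conv (delta [Suc i]) (bell (m - i))) x)"
      unfolding bell.simps(2) free_hom_def by (rule lin_ext_sum) (simp_all add: fin_supp_conv)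
    also have "\<dots> = (\<Sum>i\<le>m. int (m choose i) * conv (bell_inv (Suc i)) (w_elt (m - i)) x)"
      by (intro sum.cong refl) (simp add: free_hom_conv free_hom_letter "2.IH")
    finally show "free_hom bell_inv (bell (Suc m)) x = w_elt (Suc m) x"
      by (simp add: lessThan_Suc_atMost[symmetric] w_elt_delta bell_inv.simps(2)[of m])
  qed
qed

section \<open>The Bell polynomials are of binomial type\<close>

text \<open>Both sides sum \<open>(m choose i) ((m - i) choose j) f i j k\<close> over \<open>i + j + k = m\<close>.\<close>

lemma trinomial_sum_group_first_two:
  fixes f :: "nat \<Rightarrow> nat \<Rightarrow> nat \<Rightarrow> 'a::comm_semiring_1"
  shows "(\<Sum>a\<le>m. \<Sum>i\<le>a. of_nat (m choose a) * of_nat (a choose i) * f i (a - i) (m - a)) =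
         (\<Sum>i\<le>m. \<Sum>j\<le>m - i. of_nat (m choose i) * of_nat ((m - i) choose j) * f i j (m - i - j))"
proof -
  have "(\<Sum>a\<le>m. \<Sum>i\<le>a. of_nat (m choose a) * of_nat (a choose i) * f i (a - i) (m - a)) =
      (\<Sum>(a, i)\<in>Sigma {..m} atMost. of_nat (m choose a) * of_nat (a choose i) * f i (a - i) (m - a))"
    by (rule sum.Sigma) auto
  also have "\<dots> = (\<Sum>(i, j)\<in>Sigma {..m} (\<lambda>i. {..m - i}).
      of_nat (m choose (i + j)) * of_nat ((i + j) choose i) * f i j (m - i - j))"
    by (rule sum.reindex_bij_witness[where i="\<lambda>(i, j). (i + j, i)" and j="\<lambda>(a, i). (i, a - i)"])
       (auto simp: ac_simps)
  also have "\<dots> = (\<Sum>(i, j)\<in>Sigma {..m} (\<lambda>i. {..m - i}).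
      of_nat (m choose i) * of_nat ((m - i) choose j) * f i j (m - i - j))"
    by (intro sum.cong refl) (auto simp flip: of_nat_mult simp: choose_mult)
  also have "\<dots> = (\<Sum>i\<le>m. \<Sum>j\<le>m - i. of_nat (m choose i) * of_nat ((m - i) choose j) * f i j (m - i - j))"
    by (rule sum.Sigma[symmetric]) auto
  finally show ?thesis .
qed

lemma trinomial_sum_group_middle:
  fixes f :: "nat \<Rightarrow> nat \<Rightarrow> nat \<Rightarrow> 'a::comm_semiring_1"
  shows "(\<Sum>a\<le>m. \<Sum>i\<le>m - a. of_nat (m choose a) * of_nat ((m - a) choose i) * f i a (m - a - i)) =
         (\<Sum>i\<le>m. \<Sum>j\<le>m - i. of_nat (m choose i) * of_nat ((m - i) choose j) * f i j (m - i - j))"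
proof -
  have swap: "(m choose j) * ((m - j) choose i) = (m choose i) * ((m - i) choose j)"
    if "i + j \<le> m" for i j
    using choose_mult[of i "i + j" m] choose_mult[of j "i + j" m] binomial_symmetric[of i "i + j"] that
    by (simp add: mult.commute)
  have "(\<Sum>a\<le>m. \<Sum>i\<le>m - a. of_nat (m choose a) * of_nat ((m - a) choose i) * f i a (m - a - i)) =
      (\<Sum>(a, i)\<in>Sigma {..m} (\<lambda>a. {..m - a}).
        of_nat (m choose a) * of_nat ((m - a) choose i) * f i a (m - a - i))"
    by (rule sum.Sigma) auto
  also have "\<dots> = (\<Sum>(i, j)\<in>Sigma {..m} (\<lambda>i. {..m - i}).
      of_nat (m choose j) * of_nat ((m - j) choose i) * f i j (m - j - i))"
    by (rule sum.reindex_bij_witness[where i="\<lambda>(i, j). (j, i)" and j="\<lambda>(a, i). (i, a)"])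
       (auto simp: ac_simps)
  also have "\<dots> = (\<Sum>(i, j)\<in>Sigma {..m} (\<lambda>i. {..m - i}).
      of_nat (m choose i) * of_nat ((m - i) choose j) * f i j (m - i - j))"
    by (intro sum.cong refl) (auto simp flip: of_nat_mult simp: swap ac_simps)
  also have "\<dots> = (\<Sum>i\<le>m. \<Sum>j\<le>m - i. of_nat (m choose i) * of_nat ((m - i) choose j) * f i j (m - i - j))"
    by (rule sum.Sigma[symmetric]) auto
  finally show ?thesis .
qed

lemma sum_choose_Suc_split:
  "(\<Sum>a\<le>Suc m. of_nat (Suc m choose a) * h a :: 'a::comm_semiring_1) =
     (\<Sum>a\<le>m. of_nat (m choose a) * h (Suc a)) + (\<Sum>a\<le>m. of_nat (m choose a) * h a)"
proof -
  have "(\<Sum>a\<le>Suc m. of_nat (Suc m choose a) * h a) =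
      h 0 + (\<Sum>a\<le>m. of_nat (m choose a) * h (Suc a)) + (\<Sum>a\<le>m. of_nat (m choose Suc a) * h (Suc a))"
    unfolding sum.atMost_Suc_shift by (simp add: sum.distrib distrib_right add.assoc)
  moreover have "(\<Sum>a\<le>m. of_nat (m choose a) * h a) = (\<Sum>a\<le>Suc m. of_nat (m choose a) * h a)"
    by (simp add: binomial_eq_0)
  then have "(\<Sum>a\<le>m. of_nat (m choose a) * h a) = h 0 + (\<Sum>a\<le>m. of_nat (m choose Suc a) * h (Suc a))"
    unfolding sum.atMost_Suc_shift by simp
  ultimately show ?thesis by (simp add: ac_simps)
qed

definition bell_binomial :: "nat \<Rightarrow> nat list \<times> nat list \<Rightarrow> int" where
  "bell_binomial n = (\<lambda>x. \<Sum>l\<le>n. int (n choose l) * tensor (bell l) (bell (n - l)) x)"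

lemma sum_tensor_bell_Suc_left:
  "(\<Sum>a\<le>m. int (m choose a) * tensor (bell (Suc a)) (bell (m - a)) x) =
   (\<Sum>i\<le>m. \<Sum>j\<le>m - i. int (m choose i) * int ((m - i) choose j) *
      tensor (conv (delta [Suc i]) (bell j)) (bell (m - i - j)) x)"
proof -
  have "(\<Sum>a\<le>m. int (m choose a) * tensor (bell (Suc a)) (bell (m - a)) x) =
      (\<Sum>a\<le>m. \<Sum>i\<le>a. int (m choose a) * int (a choose i) *
        tensor (conv (delta [Suc i]) (bell (a - i))) (bell (m - a)) x)"
    by (simp add: tensor_sum_left sum_distrib_left mult.assoc)
  also have "\<dots> = (\<Sum>i\<le>m. \<Sum>j\<le>m - i. int (m choose i) * int ((m - i) choose j) *
      tensor (conv (delta [Suc i]) (bell j)) (bell (m - i - j)) x)"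
    by (rule trinomial_sum_group_first_two)
  finally show ?thesis .
qed

lemma sum_tensor_bell_Suc_right:
  "(\<Sum>a\<le>m. int (m choose a) * tensor (bell a) (bell (Suc m - a)) x) =
   (\<Sum>i\<le>m. \<Sum>j\<le>m - i. int (m choose i) * int ((m - i) choose j) *
      tensor (bell j) (conv (delta [Suc i]) (bell (m - i - j))) x)"
proof -
  have "(\<Sum>a\<le>m. int (m choose a) * tensor (bell a) (bell (Suc m - a)) x) =
      (\<Sum>a\<le>m. \<Sum>i\<le>m - a. int (m choose a) * int ((m - a) choose i) *
        tensor (bell a) (conv (delta [Suc i]) (bell (m - a - i))) x)"
    by (intro sum.cong refl) (simp add: Suc_diff_le tensor_sum_right sum_distrib_left mult.assoc)
  also have "\<dots> = (\<Sum>i\<le>m. \<Sum>j\<le>m - i. int (m choose i) * int ((m - i) choose j) *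
      tensor (bell j) (conv (delta [Suc i]) (bell (m - i - j))) x)"
    by (rule trinomial_sum_group_middle)
  finally show ?thesis .
qed

lemma bell_binomial_Suc:
  "bell_binomial (Suc m) x =
     (\<Sum>i\<le>m. int (m choose i) * conv (xi_coprod_gen (Suc i)) (bell_binomial (m - i)) x)"
proof -
  have "bell_binomial (Suc m) x =
      (\<Sum>a\<le>m. int (m choose a) * tensor (bell (Suc a)) (bell (m - a)) x) +
      (\<Sum>a\<le>m. int (m choose a) * tensor (bell a) (bell (Suc m - a)) x)"
    unfolding bell_binomial_def
    using sum_choose_Suc_split[of m "\<lambda>a. tensor (bell a) (bell (Suc m - a)) x"] by simp
  also have "\<dots> = (\<Sum>i\<le>m. int (m choose i) * conv (xi_coprod_gen (Suc i)) (bell_binomial (m - i)) x)"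
    unfolding sum_tensor_bell_Suc_left sum_tensor_bell_Suc_right
    by (simp add: bell_binomial_def conv_sum_right conv_xi_coprod_gen sum_distrib_left
        distrib_left sum.distrib mult.assoc add.commute)
  finally show ?thesis .
qed

lemma Delta_Xi_bell: "Delta_Xi (bell n) = bell_binomial n"
proof (induction n rule: less_induct)
  case (less n)
  show ?case
  proof (cases n)
    case 0
    then show ?thesis
      by (intro ext) (simp add: bell_binomial_def Delta_Xi_free_hom free_hom_one tensor_delta
                                zero_prod_def zero_list_Nil)
  next
    case (Suc m)
    show ?thesis
    proof
      fix x
      have "Delta_Xi (bell n) x =
          (\<Sum>i\<le>m. int (m choose i) * Delta_Xi (conv (delta [Suc i]) (bell (m - i))) x)"
        unfolding Suc bell.simps Delta_Xi_free_hom free_hom_def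
        by (rule lin_ext_sum) (simp_all add: fin_supp_conv supp_delta)
      also have "\<dots> = (\<Sum>i\<le>m. int (m choose i) * conv (xi_coprod_gen (Suc i)) (bell_binomial (m - i)) x)"
        by (intro sum.cong refl)
           (simp add: Delta_Xi_free_hom free_hom_conv supp_delta free_hom_letter
                 less[unfolded Delta_Xi_free_hom] Suc)
      finally show "Delta_Xi (bell n) x = bell_binomial n x"
        by (simp add: Suc bell_binomial_Suc)
    qed
  qed
qed

lemma tensor_word_prod_bell_w_elt:
  "lin_ext (tensor_word_prod bell) (tensor (w_elt k) (w_elt l)) = tensor (bell k) (bell l)"
  by (cases k; cases l) (simp_all add: w_elt_delta tensor_delta tensor_word_prod_def zero_list_Nil)

lemma t_map_bell_w_coprod_gen: "lin_ext (tensor_word_prod bell) (w_coprod_gen n) = bell_binomial n"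
proof
  fix x
  have "lin_ext (tensor_word_prod bell) (w_coprod_gen n) x =
      (\<Sum>k\<le>n. int (n choose k) * lin_ext (tensor_word_prod bell) (tensor (w_elt k) (w_elt (n - k))) x)"
    unfolding w_coprod_gen_def by (rule lin_ext_sum) (auto intro!: fin_supp_tensor)
  then show "lin_ext (tensor_word_prod bell) (w_coprod_gen n) x = bell_binomial n x"
    by (simp add: bell_binomial_def tensor_word_prod_bell_w_elt)
qed

lemma free_hom_bell_coprod:
  assumes "fin_supp p"
  shows "t_map (free_hom bell) (Delta_W p) = Delta_Xi (free_hom bell p)"
proof -
  have "t_map (free_hom bell) (Delta_W p) =
      free_hom (\<lambda>n. lin_ext (tensor_word_prod bell) (w_coprod_gen n)) p"
    unfolding t_map_free_hom Delta_W_free_hom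
    by (rule lin_ext_free_hom) (simp_all add: assms tensor_word_prod_zero tensor_word_prod_plus)
  also have "\<dots> = free_hom (\<lambda>n. Delta_Xi (bell n)) p"
    by (simp add: t_map_bell_w_coprod_gen Delta_Xi_bell)
  also have "\<dots> = Delta_Xi (free_hom bell p)"
    unfolding Delta_Xi_free_hom by (rule free_hom_free_hom[symmetric]) (simp_all add: assms)
  finally show ?thesis .
qed

theorem mainTheorem11:
  shows "\<exists>f. graded_hopf_iso f"
proof -
  have bell_pos_words: "supp (bell a) \<subseteq> pos_words" for a
    using supp_bell pos_words_deg_subset by blast
  have bij: "bij_betw (free_hom bell) NC NC"
  proof (rule bij_betw_byWitness[where f' = "free_hom bell_inv"])
    show "\<forall>p\<in>NC. free_hom bell_inv (free_hom bell p) = p"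
      by (auto intro: free_hom_inverse_NC simp: free_hom_bell_inv_bell w_elt_delta)
    show "\<forall>p\<in>NC. free_hom bell (free_hom bell_inv p) = p"
      by (auto intro: free_hom_inverse_NC simp: free_hom_bell_bell_inv)
    show "free_hom bell ` NC \<subseteq> NC" "free_hom bell_inv ` NC \<subseteq> NC"
      using free_hom_NC[of bell] free_hom_NC[of bell_inv] bell_pos_words supp_bell_inv by auto
  qed
  have add: "\<forall>p\<in>NC. \<forall>q\<in>NC. free_hom bell (nc_add p q) = nc_add (free_hom bell p) (free_hom bell q)"
    by (auto simp: NC_iff nc_add_def free_hom_def lin_ext_add)
  have mult: "\<forall>p\<in>NC. \<forall>q\<in>NC. free_hom bell (nc_mult p q) = nc_mult (free_hom bell p) (free_hom bell q)"
    by (auto simp: NC_iff nc_mult_conv free_hom_conv)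
  show ?thesis
    unfolding graded_hopf_iso_def
    using bij add mult free_hom_homogeneous[OF supp_bell] free_hom_bell_coprod
      free_hom_counit[OF supp_bell]
    by (auto simp: NC_iff nc_one_delta free_hom_one zero_list_Nil)
qed

end
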